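(* Let $\mu,\nu$ be integers with $\frac14(\mu+\nu)\le\mu\le\nu\le\frac34(\mu+\nu)$, let $M,N$ be integers with $q^{\mu-1}\le M<q^\mu$, $q^{\nu-1}\le N<q^\nu$, let $k\in\{\mu+\nu-4,\dots,\mu+\nu-1\}$, and for integers $m$ let $I(k,m)=\{n\in\mathbb{Z}: N/q\le n<N,\ q^k/m\le n<q^{k+1}/m\}$. Let $h,s$ be positive integers and $h_1,r,\mu_0,\mu_1,\mu_2$ integers with $\mu_0<\mu_1<\mu_2$ and $hsq^{\mu_1-\mu_2}\notin\mathbb{Z}$. Then for every interval $I_1\subseteq[q^{\mu-2},q^\mu)$, $$\Big|\sum_{m\in I_1}e\Big(\frac{h_1rm}{q^{\mu_2}}\Big)\sum_{n\in I(k,m)}e\big(hsnq^{\mu_1-\mu_2}\big)\Big|\ll\big(shq^{3(\mu_2-\mu_1)}\big)^{1/2}q^{\frac78(\mu+\nu)}.$$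
   Context: $q\ge2$ is a fixed integer, $e(x)=\exp(2\pi ix)$, and sums over $m\in I_1$ run over integers. The implied constant depends at most on $q$. *)

theory Defs
  imports "HOL-Analysis.Analysis"
begin

definition ee :: "real \<Rightarrow> complex" where
  "ee x = exp (2 * complex_of_real pi * \<i> * complex_of_real x)"

definition Ikm :: "int \<Rightarrow> int \<Rightarrow> int \<Rightarrow> int \<Rightarrow> int set" where
  "Ikm q N k m = {n::int. real_of_int N / real_of_int q \<le> real_of_int n \<and> n < N \<and>
      real_of_int q powi k / real_of_int m \<le> real_of_int n \<and>
      real_of_int n < real_of_int q powi (k+1) / real_of_int m}"

end

theory Submission
  imports Defs
begin

text \<open>The estimate is the trivial one. Put \<open>Q = q^(\<mu>2-\<mu>1)\<close> and
  \<open>\<alpha> = h s / Q\<close>. Then \<open>Q \<alpha>\<close> is an integer but \<open>\<alpha>\<close> is not, so the geometric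
  sum of \<open>e(n \<alpha>)\<close> over any \<open>Q\<close> consecutive integers vanishes. Hence the inner
  sum over the interval \<open>I(k,m)\<close> is at most \<open>Q \<le> (s h Q^3)^(1/2)\<close> in modulus.
  The outer sum has fewer than \<open>q^\<mu> \<le> q^(7(\<mu>+\<nu>)/8)\<close> terms.\<close>

lemma ee_add: "ee (x + y) = ee x * ee y"
  unfolding ee_def by (simp add: exp_add[symmetric] algebra_simps)

lemma norm_ee [simp]: "norm (ee x) = 1"
proof -
  have "ee x = exp (\<i> * complex_of_real (2 * pi * x))"
    unfolding ee_def by (simp add: algebra_simps)
  then show ?thesis by (simp add: norm_exp_i_times)
qed

lemma ee_of_nat_mult: "ee (real j * x) = ee x ^ j"
proof -
  have "ee (real j * x) = exp (of_nat j * (2 * complex_of_real pi * \<i> * complex_of_real x))"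
    unfolding ee_def by (simp add: algebra_simps)
  then show ?thesis by (simp add: exp_of_nat_mult ee_def)
qed

lemma ee_eq_1_iff: "ee x = 1 \<longleftrightarrow> x \<in> \<int>"
proof
  assume "ee x = 1"
  then obtain n where "Im (2 * complex_of_real pi * \<i> * complex_of_real x) = real_of_int (2 * n) * pi"
    unfolding ee_def exp_eq_1 by blast
  then have "x = real_of_int n" by simp
  then show "x \<in> \<int>" by simp
next
  assume "x \<in> \<int>"
  then have "exp (complex_of_real (2 * x * pi) * \<i>) = 1" by (rule exp_integer_2pi)
  then show "ee x = 1" unfolding ee_def by (simp add: algebra_simps)
qed

lemma sum_ee_period_eq_0:
  fixes Q :: nat
  assumes "real Q * \<alpha> \<in> \<int>" "\<alpha> \<notin> \<int>"
  shows "(\<Sum>n\<in>{a..<a + int Q}. ee (real_of_int n * \<alpha>)) = 0"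
proof -
  have shift: "{a..<a + int Q} = (\<lambda>j. a + int j) ` {..<Q}"
  proof (rule set_eqI, rule iffI)
    fix x assume "x \<in> {a..<a + int Q}"
    then have "x = a + int (nat (x - a))" "nat (x - a) < Q" by auto
    then show "x \<in> (\<lambda>j. a + int j) ` {..<Q}" by blast
  qed auto
  have "(\<Sum>n\<in>{a..<a + int Q}. ee (real_of_int n * \<alpha>)) = (\<Sum>j<Q. ee (real_of_int (a + int j) * \<alpha>))"
    unfolding shift by (simp add: sum.reindex inj_on_def)
  also have "\<dots> = ee (real_of_int a * \<alpha>) * (\<Sum>j<Q. ee \<alpha> ^ j)"
    by (simp add: sum_distrib_left ee_add[symmetric] ee_of_nat_mult[symmetric] algebra_simps)
  also have "(\<Sum>j<Q. ee \<alpha> ^ j) = 0"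
  proof -
    have "ee \<alpha> \<noteq> 1" "ee \<alpha> ^ Q = 1"
      using assms by (simp_all add: ee_eq_1_iff ee_of_nat_mult[symmetric])
    then show ?thesis by (simp add: geometric_sum)
  qed
  finally show ?thesis by simp
qed

lemma norm_sum_atLeastLessThan_le_period:
  fixes Q :: nat and g :: "int \<Rightarrow> 'a::real_normed_vector"
  assumes "Q > 0" "\<And>n. norm (g n) \<le> 1" "\<And>a. (\<Sum>n\<in>{a..<a + int Q}. g n) = 0"
  shows "norm (\<Sum>n\<in>{a..<b}. g n) \<le> real Q"
proof (induction "nat (b - a)" arbitrary: a rule: less_induct)
  case less
  show ?case
  proof (cases "b - a < int Q")
    case True
    have "norm (\<Sum>n\<in>{a..<b}. g n) \<le> (\<Sum>n\<in>{a..<b}. 1)"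
      by (rule order_trans[OF norm_sum sum_mono]) (use assms(2) in auto)
    with True show ?thesis by simp
  next
    case False
    then have "{a..<b} = {a..<a + int Q} \<union> {a + int Q..<b}" by auto
    then have "(\<Sum>n\<in>{a..<b}. g n) = (\<Sum>n\<in>{a + int Q..<b}. g n)"
      using assms(3) by (simp add: sum.union_disjoint)
    moreover have "nat (b - (a + int Q)) < nat (b - a)" using False assms(1) by auto
    ultimately show ?thesis using less by metis
  qed
qed

lemma Ikm_eq_atLeastLessThan:
  "Ikm q N k m = {max \<lceil>real_of_int N / real_of_int q\<rceil> \<lceil>real_of_int q powi k / real_of_int m\<rceil>
     ..< min N \<lceil>real_of_int q powi (k+1) / real_of_int m\<rceil>}"
proof -
  have "real_of_int n < x \<longleftrightarrow> n < \<lceil>x\<rceil>" for x n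
    using ceiling_le_iff[of x n] by linarith
  then show ?thesis unfolding Ikm_def by (auto simp: ceiling_le_iff)
qed

lemma norm_sum_ee_Ikm_le:
  fixes Q :: nat
  assumes "Q > 0" "real Q * \<alpha> \<in> \<int>" "\<alpha> \<notin> \<int>"
  shows "norm (\<Sum>n\<in>Ikm q N k m. ee (real_of_int n * \<alpha>)) \<le> real Q"
  unfolding Ikm_eq_atLeastLessThan
  using assms by (intro norm_sum_atLeastLessThan_le_period) (simp_all add: sum_ee_period_eq_0)

lemma norm_sum_ee_Ikm_powi_le:
  fixes q c :: int
  assumes q: "q \<ge> 2" and "\<mu>1 < \<mu>2"
    and nonint: "real_of_int c * real_of_int q powi (\<mu>1-\<mu>2) \<notin> \<int>"
  shows "norm (\<Sum>n\<in>Ikm q N k m. ee (real_of_int (c * n) * real_of_int q powi (\<mu>1-\<mu>2)))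
    \<le> real_of_int q ^ nat (\<mu>2 - \<mu>1)"
proof -
  define Q where "Q = nat (q ^ nat (\<mu>2 - \<mu>1))"
  have Q: "real Q = real_of_int q ^ nat (\<mu>2 - \<mu>1)" "Q > 0" using q by (simp_all add: Q_def)
  have "real_of_int q powi (\<mu>1-\<mu>2) = 1 / real Q"
    using \<open>\<mu>1 < \<mu>2\<close> by (simp add: Q power_int_def power_inverse divide_inverse)
  then show ?thesis
    using norm_sum_ee_Ikm_le[of Q "real_of_int c / real Q"] Q nonint
    by (simp add: mult.commute mult.left_commute)
qed

lemma norm_sum_mult_le_card:
  fixes f g :: "'a \<Rightarrow> 'b::real_normed_algebra_1"
  assumes "\<And>x. x \<in> A \<Longrightarrow> norm (f x) \<le> 1" "\<And>x. x \<in> A \<Longrightarrow> norm (g x) \<le> B"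
  shows "norm (\<Sum>x\<in>A. f x * g x) \<le> real (card A) * B"
proof -
  have "norm (\<Sum>x\<in>A. f x * g x) \<le> (\<Sum>x\<in>A. norm (f x) * norm (g x))"
    by (rule order_trans[OF norm_sum sum_mono]) (rule norm_mult_ineq)
  also have "\<dots> \<le> (\<Sum>x\<in>A. B)"
  proof (rule sum_mono)
    fix x assume "x \<in> A"
    then have "norm (f x) * norm (g x) \<le> 1 * B" by (intro mult_mono) (simp_all add: assms)
    then show "norm (f x) * norm (g x) \<le> B" by simp
  qed
  finally show ?thesis by simp
qed

lemma card_int_points_le:
  assumes "S \<subseteq> {0<..<real_of_int K}"
  shows "card {m::int. real_of_int m \<in> S} \<le> nat K"
proof -
  have "{m::int. real_of_int m \<in> S} \<subseteq> {1..<K}" using assms by force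
  then have "card {m::int. real_of_int m \<in> S} \<le> card {1..<K}" by (intro card_mono) auto
  then show ?thesis by simp
qed

lemma power_le_sqrt_mult_power:
  fixes x t :: real
  assumes "1 \<le> x" "1 \<le> t"
  shows "x ^ d \<le> sqrt (t * x ^ (3 * d))"
proof -
  have "x ^ (2 * d) \<le> 1 * x ^ (3 * d)" using assms(1) by (simp add: power_increasing)
  also have "\<dots> \<le> t * x ^ (3 * d)" using assms by (intro mult_right_mono) auto
  finally have "sqrt (x ^ (2 * d)) \<le> sqrt (t * x ^ (3 * d))" by (rule real_sqrt_le_mono)
  moreover have "sqrt (x ^ (2 * d)) = x ^ d"
    using assms(1) by (simp add: power_mult_distrib[symmetric] mult.commute[of 2] power_mult)
  ultimately show ?thesis by simp
qed

lemma powi_le_powr: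
  fixes x :: real
  assumes "1 \<le> x" "real_of_int n \<le> e"
  shows "x powi n \<le> x powr e"
  using assms powr_mono[OF assms(2,1)] by (simp add: powr_real_of_int')

lemma pos_exponent_of_bounds:
  fixes x :: real
  assumes "1 < x" "x powi (n - 1) \<le> real_of_int M" "real_of_int M < x powi n"
  shows "n \<ge> 1"
proof (rule ccontr)
  assume "\<not> n \<ge> 1"
  then have "x powi n \<le> x powi 0" using assms(1) by (intro power_int_increasing) auto
  moreover have "x powi (n - 1) > 0" using assms(1) by simp
  then have "real_of_int M \<ge> 1" using assms(2) by simp
  ultimately show False using assms(3) by simp
qed

lemma norm_double_exp_sum_le:
  fixes q :: int and I1 :: "real set"
  assumes q: "q \<ge> 2" and "\<mu> \<le> \<nu>"
    and M: "real_of_int q powi (\<mu>-1) \<le> real_of_int M" "real_of_int M < real_of_int q powi \<mu>"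
    and "\<mu>1 < \<mu>2" "h > 0" "s > 0"
    and nonint: "real_of_int (h * s) * real_of_int q powi (\<mu>1-\<mu>2) \<notin> \<int>"
    and I1: "I1 \<subseteq> {real_of_int q powi (\<mu>-2) ..< real_of_int q powi \<mu>}"
  shows "norm (\<Sum>m\<in>{m::int. real_of_int m \<in> I1}.
        ee (real_of_int (h1 * r * m) / real_of_int q powi \<mu>2) *
        (\<Sum>n\<in>Ikm q N k m. ee (real_of_int (h * s * n) * real_of_int q powi (\<mu>1-\<mu>2))))
    \<le> sqrt (real_of_int (s * h) * real_of_int q powi (3*(\<mu>2-\<mu>1)))
          * real_of_int q powr (7/8 * real_of_int (\<mu>+\<nu>))"
proof -
  define d where "d = nat (\<mu>2 - \<mu>1)"
  have q_pos: "real_of_int q ^ d > 0" using q by simp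
  have inner: "norm (\<Sum>n\<in>Ikm q N k m. ee (real_of_int (h * s * n) * real_of_int q powi (\<mu>1-\<mu>2)))
      \<le> real_of_int q ^ d" for m
    unfolding d_def using norm_sum_ee_Ikm_powi_le[OF q \<open>\<mu>1 < \<mu>2\<close> nonint] .
  have "\<mu> \<ge> 1" using pos_exponent_of_bounds[OF _ M] q by simp
  then have Q\<mu>: "real_of_int (q ^ nat \<mu>) = real_of_int q powi \<mu>" by (simp add: power_int_def)
  have "real_of_int q powi (\<mu>-2) > 0" using q by simp
  then have "I1 \<subseteq> {0<..<real_of_int (q ^ nat \<mu>)}" using I1 unfolding Q\<mu> by fastforce
  then have "real (card {m::int. real_of_int m \<in> I1}) \<le> real (nat (q ^ nat \<mu>))"
    by (intro of_nat_mono card_int_points_le)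
  then have card: "real (card {m::int. real_of_int m \<in> I1}) \<le> real_of_int q powi \<mu>"
    using q by (simp add: Q\<mu>[symmetric])
  have "nat (3*(\<mu>2-\<mu>1)) = 3 * d" unfolding d_def by (simp add: nat_mult_distrib)
  then have "real_of_int q powi (3*(\<mu>2-\<mu>1)) = real_of_int q ^ (3 * d)"
    using \<open>\<mu>1 < \<mu>2\<close> by (simp add: power_int_def)
  moreover have "1 * 1 \<le> s * h" using \<open>h > 0\<close> \<open>s > 0\<close> by (intro mult_mono) auto
  then have "1 \<le> real_of_int (s * h)" by linarith
  ultimately have sqrt: "real_of_int q ^ d \<le> sqrt (real_of_int (s * h) * real_of_int q powi (3*(\<mu>2-\<mu>1)))"
    using q by (simp add: power_le_sqrt_mult_power)
  have powr: "real_of_int q powi \<mu> \<le> real_of_int q powr (7/8 * real_of_int (\<mu>+\<nu>))"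
    using q \<open>\<mu> \<le> \<nu>\<close> \<open>\<mu> \<ge> 1\<close> by (intro powi_le_powr) auto
  have "norm (\<Sum>m\<in>{m::int. real_of_int m \<in> I1}.
        ee (real_of_int (h1 * r * m) / real_of_int q powi \<mu>2) *
        (\<Sum>n\<in>Ikm q N k m. ee (real_of_int (h * s * n) * real_of_int q powi (\<mu>1-\<mu>2))))
      \<le> real (card {m::int. real_of_int m \<in> I1}) * real_of_int q ^ d"
    by (intro norm_sum_mult_le_card inner) simp
  also have "\<dots> \<le> real_of_int q powi \<mu> * real_of_int q ^ d"
    using card q_pos by (intro mult_right_mono) simp_all
  also have "\<dots> \<le> real_of_int q powr (7/8 * real_of_int (\<mu>+\<nu>))
      * sqrt (real_of_int (s * h) * real_of_int q powi (3*(\<mu>2-\<mu>1)))"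
    using powr sqrt q_pos by (intro mult_mono) simp_all
  finally show ?thesis by (simp only: mult.commute)
qed

theorem mainTheorem7:
  fixes q :: int
  assumes "q \<ge> 2"
  shows "\<exists>C>0. \<forall>(\<mu>::int) (\<nu>::int) (M::int) (N::int) (k::int) (h::int) (s::int)
      (h1::int) (r::int) (\<mu>0::int) (\<mu>1::int) (\<mu>2::int) (I1::real set).
    real_of_int (\<mu>+\<nu>) / 4 \<le> real_of_int \<mu> \<and> \<mu> \<le> \<nu> \<and> real_of_int \<nu> \<le> 3 * real_of_int (\<mu>+\<nu>) / 4 \<and>
    (real_of_int q powi (\<mu>-1)) \<le> real_of_int M \<and> real_of_int M < (real_of_int q powi \<mu>) \<and>
    (real_of_int q powi (\<nu>-1)) \<le> real_of_int N \<and> real_of_int N < (real_of_int q powi \<nu>) \<and>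
    k \<in> {\<mu>+\<nu>-4..\<mu>+\<nu>-1} \<and> h > 0 \<and> s > 0 \<and> \<mu>0 < \<mu>1 \<and> \<mu>1 < \<mu>2 \<and>
    real_of_int (h * s) * (real_of_int q powi (\<mu>1-\<mu>2)) \<notin> \<int> \<and>
    is_interval I1 \<and> I1 \<subseteq> {(real_of_int q powi (\<mu>-2)) ..< (real_of_int q powi \<mu>)}
    \<longrightarrow>
    norm (\<Sum>m\<in>{m::int. real_of_int m \<in> I1}.
        ee (real_of_int (h1 * r * m) / (real_of_int q powi \<mu>2)) *
        (\<Sum>n\<in>Ikm q N k m. ee (real_of_int (h * s*n) * (real_of_int q powi (\<mu>1-\<mu>2)))))
    \<le> C * sqrt (real_of_int (s * h) * (real_of_int q powi (3*(\<mu>2-\<mu>1))))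
          * real_of_int q powr (7/8 * real_of_int (\<mu>+\<nu>))"
  using norm_double_exp_sum_le[OF assms] by (intro exI[of _ 1]) auto

end
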